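(* Let $\mathbf L=(L,\vee,\wedge,0,1)$ be a complemented lattice with $0\ne1$ and $\Phi$ an equivalence relation on $L$ having the Substitution Property with respect to $\to$. Then: (i) $\Phi$ has the Substitution Property with respect to $^+$; (ii) $[1]\Phi$ is a deductive system of $\mathbf L$; (iii) $\Phi\subseteq\Theta([1]\Phi)$.
   Context: For $a\in L$, $a^+:=\{x\in L\mid a\vee x=1,\ a\wedge x=0\}$ (the set of all complements of $a$), and $a\to b:=\{x\vee(a\wedge b)\mid x\in a^+\}$. An equivalence relation $\Phi$ on $L$ has the Substitution Property with respect to $^+$ if $(a,b)\in\Phi$ implies $a^+\times b^+\subseteq\Phi$, and with respect to $\to$ if $(a,b)\in\Phi$ implies $(a\to c)\times(b\to c)\subseteq\Phi$ for all $c\in L$. A deductive system of $\mathbf L$ is a subset $D\subseteq L$ such that $1\in D$, and whenever $a\in D$, $b\in L$ and $a\to b\subseteq D$, then $b\in D$. For a deductive system $D$, $\Theta(D):=\{(x,y)\in L^2\mid x\to y\subseteq D\text{ and }y\to x\subseteq D\}$. $[1]\Phi$ is the $\Phi$-class of $1$. *)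

theory Defs
  imports Main
begin

text \<open>Complemented lattices are modelled by the type class bounded_lattice
  (0 = bot, 1 = top) together with the explicit assumption that every element
  has a complement.\<close>

definition complemented :: "'a::bounded_lattice itself \<Rightarrow> bool" where
  "complemented _ \<longleftrightarrow> (\<forall>a::'a. \<exists>x. sup a x = top \<and> inf a x = bot)"

definition cset :: "'a::bounded_lattice \<Rightarrow> 'a set" where
  "cset a = {x. sup a x = top \<and> inf a x = bot}"

definition limp :: "'a::bounded_lattice \<Rightarrow> 'a \<Rightarrow> 'a set" where
  "limp a b = {sup x (inf a b) | x. x \<in> cset a}"

definition SP_cset :: "('a::bounded_lattice \<times> 'a) set \<Rightarrow> bool" where
  "SP_cset \<Phi> \<longleftrightarrow> (\<forall>a b. (a, b) \<in> \<Phi> \<longrightarrow> cset a \<times> cset b \<subseteq> \<Phi>)"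

definition SP_limp :: "('a::bounded_lattice \<times> 'a) set \<Rightarrow> bool" where
  "SP_limp \<Phi> \<longleftrightarrow> (\<forall>a b c. (a, b) \<in> \<Phi> \<longrightarrow> limp a c \<times> limp b c \<subseteq> \<Phi>)"

definition deductive_system :: "'a::bounded_lattice set \<Rightarrow> bool" where
  "deductive_system D \<longleftrightarrow> top \<in> D \<and> (\<forall>a b. a \<in> D \<and> limp a b \<subseteq> D \<longrightarrow> b \<in> D)"

definition Theta :: "'a::bounded_lattice set \<Rightarrow> ('a \<times> 'a) set" where
  "Theta D = {(x, y). limp x y \<subseteq> D \<and> limp y x \<subseteq> D}"

end

theory Submission
  imports Defs
begin

text \<open>Everything follows by specialising the substitution property for \<open>\<rightarrow>\<close>
  at three instances of the implication: \<open>a \<rightarrow> 0 = a\<^sup>+\<close> gives (i);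
  \<open>1 \<rightarrow> b = {b}\<close> turns a pair \<open>(a, 1) \<in> \<Phi>\<close> into \<open>(a \<rightarrow> b) \<times> {b} \<subseteq> \<Phi>\<close>, which is
  modus ponens for the class of \<open>1\<close>; and \<open>y \<rightarrow> y = {1}\<close> turns \<open>(x, y) \<in> \<Phi>\<close>
  into \<open>(x \<rightarrow> y) \<times> {1} \<subseteq> \<Phi>\<close>, which is (iii). The last two need complements
  to exist, so that \<open>a \<rightarrow> b\<close> is never empty.\<close>

lemma cset_top: "cset (top::'a::bounded_lattice) = {bot}"
  unfolding cset_def by auto

lemma cset_nonempty:
  assumes "complemented TYPE('a)"
  shows "cset (a::'a::bounded_lattice) \<noteq> {}"
  using assms unfolding complemented_def cset_def by auto

lemma limp_top_left: "limp (top::'a::bounded_lattice) b = {b}"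
  unfolding limp_def by (auto simp: cset_top)

lemma limp_bot_right: "limp (a::'a::bounded_lattice) bot = cset a"
  unfolding limp_def by auto

lemma limp_nonempty:
  assumes "complemented TYPE('a)"
  shows "limp (a::'a::bounded_lattice) b \<noteq> {}"
  using cset_nonempty[OF assms, of a] unfolding limp_def by auto

lemma limp_self:
  assumes "complemented TYPE('a)"
  shows "limp (a::'a::bounded_lattice) a = {top}"
proof -
  have "sup x (inf a a) = top" if "x \<in> cset a" for x
    using that unfolding cset_def by (simp add: sup_commute)
  then show ?thesis
    using cset_nonempty[OF assms, of a] unfolding limp_def by force
qed

lemma SP_limp_imp_SP_cset: "SP_limp \<Phi> \<Longrightarrow> SP_cset \<Phi>"
  unfolding SP_limp_def SP_cset_def by (metis limp_bot_right)

lemma deductive_system_class_top: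
  fixes \<Phi> :: "('a::bounded_lattice \<times> 'a) set"
  assumes "complemented TYPE('a)" and "equiv UNIV \<Phi>" and "SP_limp \<Phi>"
  shows "deductive_system (\<Phi> `` {top})"
  unfolding deductive_system_def
proof (intro conjI allI impI)
  show "top \<in> \<Phi> `` {top}"
    using assms(2) by (simp add: equiv_def refl_on_def)
next
  fix a b
  assume "a \<in> \<Phi> `` {top} \<and> limp a b \<subseteq> \<Phi> `` {top}"
  then have a_top: "(a, top) \<in> \<Phi>" and imp_top: "limp a b \<subseteq> \<Phi> `` {top}"
    using assms(2) by (auto elim: equivE symE)
  obtain y where y: "y \<in> limp a b"
    using limp_nonempty[OF assms(1)] by blast
  have "(y, b) \<in> \<Phi>"
    using assms(3) a_top y unfolding SP_limp_def by (fastforce simp: limp_top_left)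
  moreover have "(top, y) \<in> \<Phi>"
    using imp_top y by auto
  ultimately show "b \<in> \<Phi> `` {top}"
    using assms(2) by (auto elim: equivE transE)
qed

lemma limp_class_top_if_related:
  fixes \<Phi> :: "('a::bounded_lattice \<times> 'a) set"
  assumes "complemented TYPE('a)" and "sym \<Phi>" and "SP_limp \<Phi>" and "(x, y) \<in> \<Phi>"
  shows "limp x y \<subseteq> \<Phi> `` {top}"
proof
  fix u
  assume "u \<in> limp x y"
  then have "(u, top) \<in> \<Phi>"
    using assms(3,4) limp_self[OF assms(1), of y] unfolding SP_limp_def by blast
  then show "u \<in> \<Phi> `` {top}"
    using assms(2) by (auto elim: symE)
qed

lemma SP_limp_subset_Theta_class_top:
  fixes \<Phi> :: "('a::bounded_lattice \<times> 'a) set"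
  assumes "complemented TYPE('a)" and "sym \<Phi>" and "SP_limp \<Phi>"
  shows "\<Phi> \<subseteq> Theta (\<Phi> `` {top})"
proof (clarify)
  fix x y
  assume xy: "(x, y) \<in> \<Phi>"
  then have "(y, x) \<in> \<Phi>"
    using assms(2) by (auto elim: symE)
  then show "(x, y) \<in> Theta (\<Phi> `` {top})"
    using xy limp_class_top_if_related[OF assms] unfolding Theta_def by blast
qed

theorem theorem6:
  fixes \<Phi> :: "('a::bounded_lattice \<times> 'a) set"
  assumes "complemented TYPE('a)"
    and "(bot::'a) \<noteq> top"
    and "equiv UNIV \<Phi>"
    and "SP_limp \<Phi>"
  shows "SP_cset \<Phi> \<and> deductive_system (\<Phi> `` {top}) \<and> \<Phi> \<subseteq> Theta (\<Phi> `` {top})"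
proof (intro conjI)
  show "SP_cset \<Phi>"
    using assms(4) by (rule SP_limp_imp_SP_cset)
  show "deductive_system (\<Phi> `` {top})"
    using assms(1,3,4) by (rule deductive_system_class_top)
  have "sym \<Phi>"
    using assms(3) by (simp add: equiv_def)
  then show "\<Phi> \<subseteq> Theta (\<Phi> `` {top})"
    using assms(1,4) by (intro SP_limp_subset_Theta_class_top)
qed

end
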